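(* Let $G=(V,E)$ be a graph on $2n$ vertices, let $0<\epsilon<1$ and $\alpha\geq 10$, and suppose that every $S\subseteq V$ with $|S|\leq 2\epsilon n$ satisfies $|N(S)|\geq\alpha|S|$. Let $M$ be a matching of $G$ that is not perfect, and partition the set of vertices not covered by $M$ into two sets $U_L,U_R$ of equal size. Let $t=\max\left(\left\lceil\log_{\alpha/4}\frac{2\epsilon n+1}{|U_L|}\right\rceil,0\right)$. If there is no augmenting path for $M$ of length at most $4t+1$ from $U_L$ to $U_R$, then with probability greater than $1/2$ over $\omega\sim\mu_M$ there exists a set $S\subseteq L_M(\omega)$ with $|S|>2\epsilon n$ such that for every $v\in S$ there is an alternating path (for $M$) of length at most $2t$ in $G_M(\omega)$ from some vertex of $U_L$ to $v$.
   Context: $N(S)=\{u\notin S:\exists v\in S,\ (u,v)\in E\}$. Given $M$ and $\omega:M\to\{0,1\}$, the bipartite graph $G_M(\omega)=(L_M(\omega),R_M(\omega),E_M(\omega))$ is defined as follows: all vertices of $U_L$ are in $L_M(\omega)$, all vertices of $U_R$ are in $R_M(\omega)$; for each edge $e=(u,v)\in M$ (with a fixed orientation of each edge), $u\in L_M(\omega)$ and $v\in R_M(\omega)$ if $\omega(e)=0$, and $u\in R_M(\omega)$, $v\in L_M(\omega)$ otherwise; $E_M(\omega)$ consists of all edges of $E$ between $L_M(\omega)$ and $R_M(\omega)$. $\mu_M$ is the uniform distribution over all functions $M\to\{0,1\}$. A walk $v_0,\dots,v_k$ is alternating for $M$ if for each $1\leq i\leq k-1$ exactly one of $(v_{i-1},v_i),(v_i,v_{i+1})$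 is in $M$; an augmenting path is an alternating path in $G$ whose endpoints are both unmatched. Length is the number of edges. *)

theory Defs
  imports "HOL-Probability.Probability_Mass_Function" "HOL-Library.FuncSet"
begin

definition graph :: "'a set \<Rightarrow> ('a \<Rightarrow> 'a \<Rightarrow> bool) \<Rightarrow> bool" where
  "graph V E \<longleftrightarrow> finite V \<and> (\<forall>x y. E x y \<longrightarrow> x \<in> V \<and> y \<in> V)
     \<and> (\<forall>x y. E x y \<longrightarrow> E y x) \<and> (\<forall>x. \<not> E x x)"

definition nbhd :: "('a \<Rightarrow> 'a \<Rightarrow> bool) \<Rightarrow> 'a set \<Rightarrow> 'a set" where
  "nbhd E S = {u. u \<notin> S \<and> (\<exists>v\<in>S. E u v)}"

(* A matching with a fixed orientation of each edge: a set of ordered pairs (u,v),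
   each an edge of G, pairwise vertex-disjoint. *)
definition matching :: "('a \<Rightarrow> 'a \<Rightarrow> bool) \<Rightarrow> ('a \<times> 'a) set \<Rightarrow> bool" where
  "matching E M \<longleftrightarrow> (\<forall>(u,v)\<in>M. E u v) \<and>
     (\<forall>e\<in>M. \<forall>e'\<in>M. e \<noteq> e' \<longrightarrow> {fst e, snd e} \<inter> {fst e', snd e'} = {})"

definition covered :: "('a \<times> 'a) set \<Rightarrow> 'a set" where
  "covered M = fst ` M \<union> snd ` M"

definition inM :: "('a \<times> 'a) set \<Rightarrow> 'a \<Rightarrow> 'a \<Rightarrow> bool" where
  "inM M x y \<longleftrightarrow> (x, y) \<in> M \<or> (y, x) \<in> M"

definition walk_in :: "('a \<Rightarrow> 'a \<Rightarrow> bool) \<Rightarrow> 'a list \<Rightarrow> bool" where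
  "walk_in H xs \<longleftrightarrow> xs \<noteq> [] \<and> (\<forall>i. i + 1 < length xs \<longrightarrow> H (xs ! i) (xs ! (i + 1)))"

definition path_in :: "('a \<Rightarrow> 'a \<Rightarrow> bool) \<Rightarrow> 'a list \<Rightarrow> bool" where
  "path_in H xs \<longleftrightarrow> walk_in H xs \<and> distinct xs"

definition walk_length :: "'a list \<Rightarrow> nat" where
  "walk_length xs = length xs - 1"

definition alternating :: "('a \<times> 'a) set \<Rightarrow> 'a list \<Rightarrow> bool" where
  "alternating M xs \<longleftrightarrow> (\<forall>i. 1 \<le> i \<and> i + 1 < length xs \<longrightarrow>
      (inM M (xs ! (i - 1)) (xs ! i) \<noteq> inM M (xs ! i) (xs ! (i + 1))))"

definition augmenting_path :: "('a \<Rightarrow> 'a \<Rightarrow> bool) \<Rightarrow> ('a \<times> 'a) set \<Rightarrow> 'a list \<Rightarrow> bool" where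
  "augmenting_path E M xs \<longleftrightarrow> path_in E xs \<and> alternating M xs
     \<and> hd xs \<notin> covered M \<and> last xs \<notin> covered M"

(* omega : M \<rightarrow> {0,1}, encoded with False = 0, True = 1 *)
definition L_M :: "'a set \<Rightarrow> ('a \<times> 'a) set \<Rightarrow> (('a \<times> 'a) \<Rightarrow> bool) \<Rightarrow> 'a set" where
  "L_M UL M \<omega> = UL \<union> {u. \<exists>v. (u, v) \<in> M \<and> \<not> \<omega> (u, v)} \<union> {v. \<exists>u. (u, v) \<in> M \<and> \<omega> (u, v)}"

definition R_M :: "'a set \<Rightarrow> ('a \<times> 'a) set \<Rightarrow> (('a \<times> 'a) \<Rightarrow> bool) \<Rightarrow> 'a set" where
  "R_M UR M \<omega> = UR \<union> {v. \<exists>u. (u, v) \<in> M \<and> \<not> \<omega> (u, v)} \<union> {u. \<exists>v. (u, v) \<in> M \<and> \<omega> (u, v)}"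

definition E_M :: "('a \<Rightarrow> 'a \<Rightarrow> bool) \<Rightarrow> 'a set \<Rightarrow> 'a set \<Rightarrow> ('a \<times> 'a) set
    \<Rightarrow> (('a \<times> 'a) \<Rightarrow> bool) \<Rightarrow> 'a \<Rightarrow> 'a \<Rightarrow> bool" where
  "E_M E UL UR M \<omega> x y \<longleftrightarrow> E x y \<and>
     ((x \<in> L_M UL M \<omega> \<and> y \<in> R_M UR M \<omega>) \<or> (x \<in> R_M UR M \<omega> \<and> y \<in> L_M UL M \<omega>))"

definition mu_M :: "('a \<times> 'a) set \<Rightarrow> (('a \<times> 'a) \<Rightarrow> bool) pmf" where
  "mu_M M = pmf_of_set (M \<rightarrow>\<^sub>E (UNIV :: bool set))"

end

theory Submission
  imports Defs
begin

text \<open>Explore \<open>G\<^sub>M(\<omega>)\<close> from \<open>U\<^sub>L\<close> in rounds: \<open>S\<^sub>0 = U\<^sub>L\<close>, and \<open>S\<^sub>i\<^sub>+\<^sub>1\<close> adds the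
  matching partners of those vertices of \<open>N(S\<^sub>i)\<close> that lie on the right. Without short
  augmenting paths every vertex of \<open>N(S\<^sub>i)\<close> is matched, and a matching edge is looked at
  only when it first meets the frontier \<open>N(S\<^sub>i)\<close>, so its orientation is a fresh fair coin.
  A fresh edge with one end in the frontier pays off (its partner joins \<open>S\<^sub>i\<^sub>+\<^sub>1\<close>) with
  probability \<open>1/2\<close>; as long as at least a quarter of them do, a potential argument
  (exposed edges whose left end is not reached stay below \<open>3 |S\<^sub>i|\<close>) turns the expansion
  \<open>|N(S\<^sub>i)| \<ge> \<alpha> |S\<^sub>i|\<close> into \<open>|S\<^sub>i\<^sub>+\<^sub>1| \<ge> (\<alpha>/4) |S\<^sub>i|\<close>, so \<open>S\<^sub>t\<close> would exceed \<open>2\<epsilon>n\<close>.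
  Round \<open>i\<close> fails with probability at most \<open>(337/384)\<^bsup>w(i)\<^esup>\<close> with \<open>w(i) \<ge> 10\<close> growing
  linearly, and these bounds sum to less than \<open>1/2\<close>.\<close>

section \<open>Counting arguments and elementary bounds\<close>

lemma card_sparse_subsets_le:
  assumes "finite B"
  shows "real (card {T. T \<subseteq> B \<and> 4 * card T + h < card B})
           \<le> (337/384) ^ (card B + h) * 2 ^ card B"
proof -
  let ?b = "card B"
  \<comment> \<open>Markov's inequality for the weight \<open>(4/3) ^ (card B - h - 4 * card T)\<close>, whose sum over
    \<open>Pow B\<close> is \<open>(4/3 * (1 + (3/4)^4)) ^ card B * (3/4) ^ h = (2 * 337/384) ^ card B * (3/4) ^ h\<close>.\<close>
  let ?w = "\<lambda>T::'a set. (4/3::real) ^ ?b * (3/4) ^ h * (81/256) ^ card T"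
  have weight_ge: "(if 4 * card T + h < ?b then 1 else 0) \<le> ?w T" for T
  proof (cases "4 * card T + h < ?b")
    case True
    have "(1::real) = (4/3) ^ ?b * (3/4) ^ ?b"
      by (simp add: power_mult_distrib[symmetric])
    also have "\<dots> \<le> (4/3) ^ ?b * (3/4) ^ (h + 4 * card T)"
      using True by (intro mult_left_mono power_decreasing) auto
    also have "\<dots> = ?w T"
    proof -
      have "(81/256::real) ^ card T = (3/4) ^ (4 * card T)"
        by (simp add: power_mult power_divide)
      then show ?thesis by (simp add: power_add)
    qed
    finally show ?thesis using True by simp
  qed simp
  have "real (card {T. T \<subseteq> B \<and> 4 * card T + h < ?b})
          = (\<Sum>T\<in>Pow B. if 4 * card T + h < ?b then 1 else 0)"
    using assms by (simp add: sum.If_cases Int_def)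
  also have "\<dots> \<le> (\<Sum>T\<in>Pow B. ?w T)"
    by (rule sum_mono) (rule weight_ge)
  also have "\<dots> = (4/3) ^ ?b * (3/4) ^ h * (\<Sum>T\<in>Pow B. (81/256) ^ card T)"
    by (simp add: sum_distrib_left)
  also have "(\<Sum>T\<in>Pow B. (81/256::real) ^ card T) = (1 + 81/256) ^ ?b"
    using prod_add[OF assms, of "\<lambda>_. 81/256" "\<lambda>_. 1::real"] by (simp add: add.commute)
  also have "(4/3::real) ^ ?b * (3/4) ^ h * (1 + 81/256) ^ ?b = (337/384) ^ ?b * 2 ^ ?b * (3/4) ^ h"
    by (simp add: power_mult_distrib[symmetric])
  also have "\<dots> \<le> (337/384) ^ ?b * 2 ^ ?b * (337/384) ^ h"
    by (intro mult_left_mono power_mono) auto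
  also have "\<dots> = (337/384) ^ (?b + h) * 2 ^ ?b"
    by (simp add: power_add)
  finally show ?thesis .
qed

definition flip_on :: "'e set \<Rightarrow> ('e \<Rightarrow> bool) \<Rightarrow> 'e \<Rightarrow> bool" where
  "flip_on U \<omega> = (\<lambda>e. if e \<in> U then \<not> \<omega> e else \<omega> e)"

lemma flip_on_flip_on [simp]: "flip_on U (flip_on U \<omega>) = \<omega>"
  by (auto simp: flip_on_def)

lemma card_agreement_fibre_eq:
  fixes c \<omega>\<^sub>0 :: "'e \<Rightarrow> bool"
  assumes "B \<subseteq> M" "B \<inter> D = {}" "T \<subseteq> B"
  defines "C \<equiv> {\<omega> \<in> M \<rightarrow>\<^sub>E (UNIV :: bool set). \<forall>e\<in>D. \<omega> e = \<omega>\<^sub>0 e}"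
  shows "card {\<omega>\<in>C. {e\<in>B. \<omega> e = c e} = T} = card {\<omega>\<in>C. {e\<in>B. \<omega> e = c e} = {}}"
proof -
  have flip_in: "flip_on T \<omega> \<in> C" if "\<omega> \<in> C" for \<omega>
    using that assms(1-3) unfolding C_def flip_on_def PiE_def extensional_def by auto
  have "{e\<in>B. flip_on T \<omega> e = c e} = T" if "{e\<in>B. \<omega> e = c e} = {}" for \<omega>
    using that \<open>T \<subseteq> B\<close> by (auto simp: flip_on_def)
  moreover have "{e\<in>B. flip_on T \<omega> e = c e} = {}" if "{e\<in>B. \<omega> e = c e} = T" for \<omega>
    using that by (auto simp: flip_on_def)
  ultimately have "bij_betw (flip_on T) {\<omega>\<in>C. {e\<in>B. \<omega> e = c e} = {}} {\<omega>\<in>C. {e\<in>B. \<omega> e = c e} = T}"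
    using flip_in by (intro bij_betw_byWitness[where f'="flip_on T"]) auto
  then show ?thesis by (simp add: bij_betw_same_card)
qed

text \<open>For \<open>\<omega>\<close> uniform in the cylinder \<open>C\<close>, the set of coordinates of \<open>B\<close> on which \<open>\<omega>\<close>
  agrees with \<open>c\<close> is uniformly distributed over \<open>Pow B\<close>.\<close>
lemma card_cylinder_agreement_le:
  fixes c \<omega>\<^sub>0 :: "'e \<Rightarrow> bool"
  assumes "finite M" "B \<subseteq> M" "B \<inter> D = {}"
    and subsets: "real (card {T. T \<subseteq> B \<and> P (card T)}) \<le> p * 2 ^ card B"
  defines "C \<equiv> {\<omega> \<in> M \<rightarrow>\<^sub>E (UNIV :: bool set). \<forall>e\<in>D. \<omega> e = \<omega>\<^sub>0 e}"
  shows "real (card {\<omega>\<in>C. P (card {e\<in>B. \<omega> e = c e})}) \<le> p * card C"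
proof -
  define agree where "agree \<omega> = {e\<in>B. \<omega> e = c e}" for \<omega> :: "'e \<Rightarrow> bool"
  define fibre where "fibre T = {\<omega>\<in>C. agree \<omega> = T}" for T
  have "finite B" using finite_subset[OF assms(2,1)] .
  have "finite C"
    unfolding C_def by (rule finite_subset[OF _ finite_PiE[OF assms(1)]]) auto
  have card_fibre: "card (fibre T) = card (fibre {})" if "T \<subseteq> B" for T
    using card_agreement_fibre_eq[OF assms(2,3) that, of \<omega>\<^sub>0 c]
    by (simp add: fibre_def agree_def C_def)
  have card_union: "card (\<Union>T\<in>\<T>. fibre T) = card \<T> * card (fibre {})" if "\<T> \<subseteq> Pow B" for \<T>
  proof -
    have "finite \<T>" using finite_subset[OF that] \<open>finite B\<close> by simp
    moreover have "finite (fibre T)" for T using \<open>finite C\<close> by (simp add: fibre_def)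
    ultimately have "card (\<Union>T\<in>\<T>. fibre T) = (\<Sum>T\<in>\<T>. card (fibre T))"
      by (intro card_UN_disjoint) (auto simp: fibre_def)
    also have "\<dots> = (\<Sum>T\<in>\<T>. card (fibre {}))"
      using that by (intro sum.cong refl card_fibre) auto
    finally show ?thesis by simp
  qed
  have "C = (\<Union>T\<in>Pow B. fibre T)"
  proof (intro equalityI subsetI)
    fix \<omega> assume "\<omega> \<in> C"
    then show "\<omega> \<in> (\<Union>T\<in>Pow B. fibre T)"
      by (intro UN_I[of "agree \<omega>"]) (auto simp: fibre_def agree_def)
  qed (auto simp: fibre_def)
  then have card_C: "card C = 2 ^ card B * card (fibre {})"
    using card_union[of "Pow B"] \<open>finite B\<close> by (simp add: card_Pow)
  have "{\<omega>\<in>C. P (card (agree \<omega>))} = (\<Union>T\<in>{T. T \<subseteq> B \<and> P (card T)}. fibre T)"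
  proof (intro equalityI subsetI)
    fix \<omega> assume "\<omega> \<in> {\<omega>\<in>C. P (card (agree \<omega>))}"
    then show "\<omega> \<in> (\<Union>T\<in>{T. T \<subseteq> B \<and> P (card T)}. fibre T)"
      by (intro UN_I[of "agree \<omega>"]) (auto simp: fibre_def agree_def)
  qed (auto simp: fibre_def)
  then have "card {\<omega>\<in>C. P (card (agree \<omega>))} = card {T. T \<subseteq> B \<and> P (card T)} * card (fibre {})"
    using card_union[of "{T. T \<subseteq> B \<and> P (card T)}"] by auto
  then have "real (card {\<omega>\<in>C. P (card (agree \<omega>))}) \<le> p * 2 ^ card B * card (fibre {})"
    using mult_right_mono[OF subsets, of "card (fibre {})"] by simp
  then show ?thesis by (simp add: card_C agree_def)
qed

lemma card_le_if_blocks_le: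
  fixes A :: "'a set" and \<K> :: "'a set set" and p :: real
  assumes "finite \<Omega>" "disjoint \<K>" "\<Union>\<K> = \<Omega>" "A \<subseteq> \<Omega>"
    and blocks: "\<And>K. K \<in> \<K> \<Longrightarrow> real (card (A \<inter> K)) \<le> p * card K"
  shows "real (card A) \<le> p * card \<Omega>"
proof -
  have "finite \<K>" using finite_UnionD[of \<K>] assms(1,3) by simp
  have "finite K" if "K \<in> \<K>" for K
    using finite_subset[OF Union_upper[OF that]] assms(1,3) by simp
  have "A = (\<Union>K\<in>\<K>. A \<inter> K)" using assms(3,4) by blast
  moreover have "card (\<Union>K\<in>\<K>. A \<inter> K) = (\<Sum>K\<in>\<K>. card (A \<inter> K))"
    using assms(2) \<open>finite \<K>\<close> \<open>\<And>K. K \<in> \<K> \<Longrightarrow> finite K\<close>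
    by (intro card_UN_disjoint) (auto simp: pairwise_def disjnt_def)
  ultimately have "real (card A) = (\<Sum>K\<in>\<K>. real (card (A \<inter> K)))"
    by simp
  also have "\<dots> \<le> (\<Sum>K\<in>\<K>. p * card K)"
    by (rule sum_mono) (rule blocks)
  also have "\<dots> = p * card \<Omega>"
    using card_Union_disjoint[OF assms(2) \<open>\<And>K. K \<in> \<K> \<Longrightarrow> finite K\<close>] assms(3)
    by (simp add: sum_distrib_left)
  finally show ?thesis .
qed

text \<open>Conditioning on exposed coordinates: \<open>D \<omega>\<close> is the set of coordinates examined
  when the process runs on \<open>\<omega>\<close>, so all data of the process are determined by \<open>\<omega>\<close>
  restricted to \<open>D \<omega>\<close>, while the coordinates in \<open>B \<omega>\<close> are still unexamined.\<close>
lemma card_exposure_event_le: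
  fixes M :: "'e set" and D B :: "('e \<Rightarrow> bool) \<Rightarrow> 'e set" and c :: "('e \<Rightarrow> bool) \<Rightarrow> 'e \<Rightarrow> bool"
    and P :: "('e \<Rightarrow> bool) \<Rightarrow> nat \<Rightarrow> bool" and Q :: "('e \<Rightarrow> bool) \<Rightarrow> bool"
  defines "\<Omega> \<equiv> M \<rightarrow>\<^sub>E (UNIV :: bool set)"
  assumes "finite M" and "p \<ge> 0"
    and unexposed: "\<And>\<omega>. \<omega> \<in> \<Omega> \<Longrightarrow> B \<omega> \<subseteq> M \<and> B \<omega> \<inter> D \<omega> = {}"
    and determined: "\<And>\<omega> \<omega>'. \<omega> \<in> \<Omega> \<Longrightarrow> \<omega>' \<in> \<Omega> \<Longrightarrow> (\<forall>e\<in>D \<omega>. \<omega>' e = \<omega> e) \<Longrightarrow>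
        D \<omega>' = D \<omega> \<and> B \<omega>' = B \<omega> \<and> c \<omega>' = c \<omega> \<and> P \<omega>' = P \<omega> \<and> Q \<omega>' = Q \<omega>"
    and subsets: "\<And>\<omega>. \<omega> \<in> \<Omega> \<Longrightarrow> Q \<omega> \<Longrightarrow>
        real (card {T. T \<subseteq> B \<omega> \<and> P \<omega> (card T)}) \<le> p * 2 ^ card (B \<omega>)"
  shows "real (card {\<omega>\<in>\<Omega>. Q \<omega> \<and> P \<omega> (card {e\<in>B \<omega>. \<omega> e = c \<omega> e})}) \<le> p * card \<Omega>"
proof -
  define A where "A = {\<omega>\<in>\<Omega>. Q \<omega> \<and> P \<omega> (card {e\<in>B \<omega>. \<omega> e = c \<omega> e})}"
  define cyl where "cyl \<omega> = {\<omega>'\<in>\<Omega>. \<forall>e\<in>D \<omega>. \<omega>' e = \<omega> e}" for \<omega>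
  have "finite \<Omega>" unfolding \<Omega>_def using \<open>finite M\<close> by (simp add: finite_PiE)
  have cyl_eq: "cyl \<omega>' = cyl \<omega>" if "\<omega> \<in> \<Omega>" "\<omega>' \<in> cyl \<omega>" for \<omega> \<omega>'
  proof -
    have "D \<omega>' = D \<omega>" using determined that unfolding cyl_def by blast
    then show ?thesis using that unfolding cyl_def by auto
  qed
  have partition: "\<Omega> = \<Union>(cyl ` \<Omega>)"
    by (auto simp: cyl_def)
  have disjoint: "disjoint (cyl ` \<Omega>)"
  proof (rule disjointI)
    fix K K' assume "K \<in> cyl ` \<Omega>" "K' \<in> cyl ` \<Omega>" "K \<noteq> K'"
    then obtain \<omega> \<omega>' where "\<omega> \<in> \<Omega>" "\<omega>' \<in> \<Omega>" "K = cyl \<omega>" "K' = cyl \<omega>'" by blast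
    then show "K \<inter> K' = {}"
      using cyl_eq \<open>K \<noteq> K'\<close> by (metis disjoint_iff)
  qed
  have A_cyl: "real (card (A \<inter> K)) \<le> p * card K" if "K \<in> cyl ` \<Omega>" for K
  proof -
    obtain \<omega> where "\<omega> \<in> \<Omega>" and K: "K = cyl \<omega>" using \<open>K \<in> cyl ` \<Omega>\<close> by blast
    have same: "B \<omega>' = B \<omega>" "c \<omega>' = c \<omega>" "P \<omega>' = P \<omega>" "Q \<omega>' = Q \<omega>" if "\<omega>' \<in> K" for \<omega>'
      using determined[OF \<open>\<omega> \<in> \<Omega>\<close>, of \<omega>'] that unfolding K cyl_def by auto
    show ?thesis
    proof (cases "Q \<omega>")
      case False
      then have "A \<inter> K = {}" using same(4) by (auto simp: A_def)
      then show ?thesis using \<open>p \<ge> 0\<close> by simp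
    next
      case True
      have K_eq: "K = {\<omega>' \<in> M \<rightarrow>\<^sub>E UNIV. \<forall>e\<in>D \<omega>. \<omega>' e = \<omega> e}"
        by (simp add: K cyl_def \<Omega>_def)
      have "A \<inter> K = {\<omega>'\<in>K. P \<omega> (card {e\<in>B \<omega>. \<omega>' e = c \<omega> e})}"
        using same True K by (auto simp: A_def cyl_def)
      then have "real (card (A \<inter> K)) = real (card {\<omega>'\<in>{\<omega>' \<in> M \<rightarrow>\<^sub>E UNIV. \<forall>e\<in>D \<omega>. \<omega>' e = \<omega> e}.
                        P \<omega> (card {e\<in>B \<omega>. \<omega>' e = c \<omega> e})})"
        unfolding K_eq by simp
      also have "\<dots> \<le> p * card {\<omega>' \<in> M \<rightarrow>\<^sub>E UNIV. \<forall>e\<in>D \<omega>. \<omega>' e = \<omega> e}"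
        using unexposed[OF \<open>\<omega> \<in> \<Omega>\<close>] subsets[OF \<open>\<omega> \<in> \<Omega>\<close> True]
        by (intro card_cylinder_agreement_le \<open>finite M\<close>) auto
      finally show ?thesis unfolding K_eq .
    qed
  qed
  show ?thesis
    unfolding A_def[symmetric]
    by (rule card_le_if_blocks_le[OF \<open>finite \<Omega>\<close> disjoint partition[symmetric] _ A_cyl])
      (auto simp: A_def)
qed

text \<open>A lower bound for the number of coins that decide round \<open>i\<close> (see \<open>step_weight_le\<close>).\<close>
definition step_weight :: "nat \<Rightarrow> nat" where
  "step_weight i = (if i = 0 then 10 else 6 * (i + 2))"

lemma sum_step_weight_less_half: "(\<Sum>i<t. (337/384::real) ^ step_weight i) < 1/2"
proof -
  define q :: real where "q = (337/384) ^ 6"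
  have "q < 1" by (simp add: q_def power_less_one_iff)
  have "(\<Sum>i<t. (337/384::real) ^ step_weight i) \<le> (\<Sum>i<Suc t. (337/384) ^ step_weight i)"
    by (simp add: sum.lessThan_Suc)
  also have "\<dots> = (337/384) ^ 10 + (\<Sum>i<t. q ^ (i + 3))"
    unfolding sum.lessThan_Suc_shift
    by (simp add: step_weight_def q_def power_mult[symmetric] algebra_simps)
  also have "(\<Sum>i<t. q ^ (i + 3)) = q ^ 3 * (1 - q ^ t) / (1 - q)"
    using \<open>q < 1\<close> by (simp add: power_add sum_distrib_right[symmetric] sum_gp_strict mult.commute)
  also have "\<dots> \<le> q ^ 3 / (1 - q)"
    using \<open>q < 1\<close> by (intro divide_right_mono) (auto simp: q_def)
  also have "(337/384::real) ^ 10 + q ^ 3 / (1 - q) < 1/2"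
    by (simp add: q_def power_divide)
  finally show ?thesis by simp
qed

lemma measure_mu_M_gt_half:
  assumes "finite M" and small: "real (card ((M \<rightarrow>\<^sub>E UNIV) - A)) < card (M \<rightarrow>\<^sub>E (UNIV :: bool set)) / 2"
  shows "measure_pmf.prob (mu_M M) A > 1/2"
proof -
  let ?\<Omega> = "M \<rightarrow>\<^sub>E (UNIV :: bool set)"
  have "finite ?\<Omega>" "?\<Omega> \<noteq> {}" using assms(1) by (auto simp: finite_PiE PiE_eq_empty_iff)
  have "card ?\<Omega> = card (?\<Omega> \<inter> A) + card (?\<Omega> - A)"
    using card_Int_Diff[OF \<open>finite ?\<Omega>\<close>] .
  then have "card ?\<Omega> / 2 < card (?\<Omega> \<inter> A)" using small by linarith
  have "0 < card ?\<Omega>"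
    using \<open>finite ?\<Omega>\<close> \<open>?\<Omega> \<noteq> {}\<close> by (simp add: card_gt_0_iff)
  then have "1/2 = (card ?\<Omega> / 2) / card ?\<Omega>" by simp
  also have "\<dots> < card (?\<Omega> \<inter> A) / card ?\<Omega>"
    using \<open>card ?\<Omega> / 2 < card (?\<Omega> \<inter> A)\<close> \<open>0 < card ?\<Omega>\<close>
    by (intro divide_strict_right_mono) auto
  also have "\<dots> = measure_pmf.prob (mu_M M) A"
    unfolding mu_M_def by (rule measure_pmf_of_set[OF \<open>?\<Omega> \<noteq> {}\<close> \<open>finite ?\<Omega>\<close>, symmetric])
  finally show ?thesis .
qed

lemma le_power_nat_ceiling_log:
  fixes b x :: real
  assumes "1 < b" "0 < x"
  shows "x \<le> b ^ nat \<lceil>log b x\<rceil>"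
proof -
  have "x = b powr log b x" using assms by simp
  also have "\<dots> \<le> b powr real (nat \<lceil>log b x\<rceil>)"
    using assms(1) of_nat_ceiling[of "log b x"] by (intro powr_mono) auto
  also have "\<dots> = b ^ nat \<lceil>log b x\<rceil>"
    using assms(1) by (simp add: powr_realpow)
  finally show ?thesis .
qed

lemma Suc_less_five_halves_power:
  assumes "0 < i" shows "real i + 1 < (5/2) ^ i"
proof -
  have "real i + 1 < 1 + real i * (3/2)" using assms by simp
  also have "\<dots> \<le> (5/2) ^ i" using Bernoulli_inequality[of "3/2" i] by simp
  finally show ?thesis .
qed

section \<open>Alternating paths in the exploration\<close>

lemma walk_in_snoc:
  assumes "walk_in H xs" "H (last xs) u"
  shows "walk_in H (xs @ [u])"
  unfolding walk_in_def
proof (intro conjI allI impI)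
  fix i assume i: "i + 1 < length (xs @ [u])"
  have "xs \<noteq> []" using assms(1) by (simp add: walk_in_def)
  show "H ((xs @ [u]) ! i) ((xs @ [u]) ! (i + 1))"
  proof (cases "i + 1 < length xs")
    case True then show ?thesis using assms(1) by (auto simp: walk_in_def nth_append)
  next
    case False
    then have "i = length xs - 1" using i by auto
    then show ?thesis using assms(2) \<open>xs \<noteq> []\<close> by (auto simp: nth_append last_conv_nth)
  qed
qed simp

lemma walk_in_mono: "(\<And>x y. H x y \<Longrightarrow> H' x y) \<Longrightarrow> walk_in H xs \<Longrightarrow> walk_in H' xs"
  unfolding walk_in_def by auto

lemma alternating_snoc:
  assumes "alternating M xs"
    and "2 \<le> length xs \<Longrightarrow> inM M (xs ! (length xs - 2)) (last xs) \<noteq> inM M (last xs) u"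
  shows "alternating M (xs @ [u])"
  unfolding alternating_def
proof (intro allI impI)
  fix i assume i: "1 \<le> i \<and> i + 1 < length (xs @ [u])"
  show "inM M ((xs @ [u]) ! (i - 1)) ((xs @ [u]) ! i) \<noteq> inM M ((xs @ [u]) ! i) ((xs @ [u]) ! (i + 1))"
  proof (cases "i + 1 < length xs")
    case True then show ?thesis using assms(1) i by (auto simp: alternating_def nth_append)
  next
    case False
    then have "2 \<le> length xs" "xs \<noteq> []" and i: "i - 1 = length xs - 2" "i = length xs - 1" "i + 1 = length xs"
      using i by auto
    then have "(xs @ [u]) ! (i - 1) = xs ! (length xs - 2)" "(xs @ [u]) ! i = last xs"
      by (auto simp: nth_append last_conv_nth)
    then show ?thesis using assms(2) \<open>2 \<le> length xs\<close> i(3) by simp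
  qed
qed

definition left_end :: "('a \<times> 'a \<Rightarrow> bool) \<Rightarrow> 'a \<times> 'a \<Rightarrow> 'a" where
  "left_end \<omega> e = (if \<omega> e then snd e else fst e)"

definition right_end :: "('a \<times> 'a \<Rightarrow> bool) \<Rightarrow> 'a \<times> 'a \<Rightarrow> 'a" where
  "right_end \<omega> e = (if \<omega> e then fst e else snd e)"

lemma left_right_end_cases:
  "(left_end \<omega> e = fst e \<and> right_end \<omega> e = snd e) \<or> (left_end \<omega> e = snd e \<and> right_end \<omega> e = fst e)"
  by (simp add: left_end_def right_end_def)

locale matching_split =
  fixes V :: "'a set" and E :: "'a \<Rightarrow> 'a \<Rightarrow> bool" and M :: "('a \<times> 'a) set" and UL UR :: "'a set"
  assumes graph: "graph V E" and matching: "matching E M"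
    and split_union: "UL \<union> UR = V - covered M" and split_disjoint: "UL \<inter> UR = {}"
begin

lemma finite_V: "finite V" and E_sym: "E x y \<Longrightarrow> E y x" and E_in_V: "E x y \<Longrightarrow> x \<in> V \<and> y \<in> V"
    and E_irrefl: "\<not> E x x"
  using graph by (auto simp: graph_def)

lemma M_edge: "e \<in> M \<Longrightarrow> E (fst e) (snd e)"
  using matching unfolding matching_def by auto

lemma M_unique: "e \<in> M \<Longrightarrow> e' \<in> M \<Longrightarrow> x \<in> {fst e, snd e} \<Longrightarrow> x \<in> {fst e', snd e'} \<Longrightarrow> e = e'"
  using matching unfolding matching_def by blast

lemma finite_M: "finite M"
proof -
  have "M \<subseteq> V \<times> V" using M_edge E_in_V by force
  then show ?thesis using finite_subset finite_V by blast
qed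

lemma covered_iff: "x \<in> covered M \<longleftrightarrow> (\<exists>e\<in>M. x \<in> {fst e, snd e})"
  unfolding covered_def by force

lemma UL_uncovered: "x \<in> UL \<Longrightarrow> x \<notin> covered M" and UR_uncovered: "x \<in> UR \<Longrightarrow> x \<notin> covered M"
    and UL_subset: "UL \<subseteq> V" and UR_subset: "UR \<subseteq> V"
  using split_union by blast+

lemma card_UL_pos:
  assumes "V - covered M \<noteq> {}" "card UL = card UR"
  shows "0 < card UL"
  using assms split_union finite_V UL_subset UR_subset
  by (metis Un_empty card_gt_0_iff finite_subset)

lemma left_end_in_V: "e \<in> M \<Longrightarrow> left_end \<omega> e \<in> V"
  using M_edge E_in_V left_right_end_cases[of \<omega> e] by metis

lemma left_end_covered: "e \<in> M \<Longrightarrow> left_end \<omega> e \<in> covered M"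
  and right_end_covered: "e \<in> M \<Longrightarrow> right_end \<omega> e \<in> covered M"
  using left_right_end_cases[of \<omega> e] covered_iff by auto

lemma inj_on_left_end: "inj_on (left_end \<omega>) M"
proof (rule inj_onI)
  fix e e' assume "e \<in> M" "e' \<in> M" "left_end \<omega> e = left_end \<omega> e'"
  then show "e = e'"
    using M_unique[of e e' "left_end \<omega> e"] left_right_end_cases[of \<omega> e] left_right_end_cases[of \<omega> e']
    by auto
qed

lemma inj_on_right_end: "inj_on (right_end \<omega>) M"
proof (rule inj_onI)
  fix e e' assume "e \<in> M" "e' \<in> M" "right_end \<omega> e = right_end \<omega> e'"
  then show "e = e'"
    using M_unique[of e e' "right_end \<omega> e"] left_right_end_cases[of \<omega> e] left_right_end_cases[of \<omega> e']
    by auto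
qed

lemma left_end_ne_right_end: "e \<in> M \<Longrightarrow> e' \<in> M \<Longrightarrow> left_end \<omega> e \<noteq> right_end \<omega> e'"
  using M_unique[of e e'] M_edge[of e] E_irrefl left_right_end_cases[of \<omega> e] left_right_end_cases[of \<omega> e']
  by (metis insert_iff)

lemma inM_right_left: "e \<in> M \<Longrightarrow> inM M (right_end \<omega> e) (left_end \<omega> e)"
  unfolding inM_def left_end_def right_end_def by auto

lemma inM_right_end_iff: "e \<in> M \<Longrightarrow> inM M w (right_end \<omega> e) \<longleftrightarrow> w = left_end \<omega> e"
proof
  assume "e \<in> M" "inM M w (right_end \<omega> e)"
  then obtain e' where "e' \<in> M" "{w, right_end \<omega> e} = {fst e', snd e'}"
    unfolding inM_def by force
  moreover have "fst e' \<noteq> snd e'" using M_edge[OF \<open>e' \<in> M\<close>] E_irrefl by auto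
  ultimately show "w = left_end \<omega> e"
    using M_unique[OF _ \<open>e \<in> M\<close>, of e' "right_end \<omega> e"] left_right_end_cases[of \<omega> e]
    by (auto simp: doubleton_eq_iff)
next
  assume "e \<in> M" "w = left_end \<omega> e"
  then show "inM M w (right_end \<omega> e)"
    by (auto simp: inM_def left_end_def right_end_def)
qed

lemma E_right_left: "e \<in> M \<Longrightarrow> E (right_end \<omega> e) (left_end \<omega> e)"
  using M_edge E_sym by (auto simp: left_end_def right_end_def)

lemma L_M_eq: "L_M UL M \<omega> = UL \<union> left_end \<omega> ` M"
  unfolding L_M_def left_end_def by (force split: if_splits)

lemma R_M_eq: "R_M UR M \<omega> = UR \<union> right_end \<omega> ` M"
  unfolding R_M_def right_end_def by (force split: if_splits)

lemma L_M_R_M_disjoint: "x \<in> L_M UL M \<omega> \<Longrightarrow> x \<notin> R_M UR M \<omega>"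
proof (cases "x \<in> covered M")
  case True
  then show "x \<in> L_M UL M \<omega> \<Longrightarrow> x \<notin> R_M UR M \<omega>"
    using left_end_ne_right_end UL_uncovered UR_uncovered unfolding L_M_eq R_M_eq by fastforce
next
  case False
  then show "x \<in> L_M UL M \<omega> \<Longrightarrow> x \<notin> R_M UR M \<omega>"
    using split_disjoint left_end_covered right_end_covered unfolding L_M_eq R_M_eq by blast
qed


section \<open>The exploration process\<close>

text \<open>\<open>reached \<omega> i\<close> is \<open>S\<^sub>i\<close>; \<open>exposed \<omega> i\<close> holds the matching edges met by one of
  \<open>N(S\<^sub>0), \<dots>, N(S\<^sub>i\<^sub>-\<^sub>1)\<close>, the only ones whose orientation the first \<open>i\<close> rounds look at.\<close>
primrec reached :: "('a \<times> 'a \<Rightarrow> bool) \<Rightarrow> nat \<Rightarrow> 'a set" where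
  "reached \<omega> 0 = UL"
| "reached \<omega> (Suc i) = reached \<omega> i \<union> left_end \<omega> ` {e\<in>M. right_end \<omega> e \<in> nbhd E (reached \<omega> i)}"

primrec exposed :: "('a \<times> 'a \<Rightarrow> bool) \<Rightarrow> nat \<Rightarrow> ('a \<times> 'a) set" where
  "exposed \<omega> 0 = {}"
| "exposed \<omega> (Suc i) = exposed \<omega> i \<union> {e\<in>M. fst e \<in> nbhd E (reached \<omega> i) \<or> snd e \<in> nbhd E (reached \<omega> i)}"

abbreviation frontier :: "('a \<times> 'a \<Rightarrow> bool) \<Rightarrow> nat \<Rightarrow> 'a set" where
  "frontier \<omega> i \<equiv> nbhd E (reached \<omega> i)"

lemma reached_mono: "i \<le> j \<Longrightarrow> reached \<omega> i \<subseteq> reached \<omega> j"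
  by (induction j) (auto simp: le_Suc_eq)

lemma exposed_mono: "i \<le> j \<Longrightarrow> exposed \<omega> i \<subseteq> exposed \<omega> j"
  by (induction j) (auto simp: le_Suc_eq)

lemma UL_subset_reached: "UL \<subseteq> reached \<omega> i"
  using reached_mono[of 0 i] by simp

lemma reached_subset_L_M: "reached \<omega> i \<subseteq> L_M UL M \<omega>"
  unfolding L_M_eq by (induction i) auto

lemma reached_subset_V: "reached \<omega> i \<subseteq> V"
  using reached_subset_L_M[of \<omega> i] UL_subset left_end_in_V unfolding L_M_eq by blast

lemma finite_reached: "finite (reached \<omega> i)"
  using finite_subset[OF reached_subset_V finite_V] .

lemma exposed_subset_M: "exposed \<omega> i \<subseteq> M"
  by (induction i) auto

lemma frontier_subset_V: "frontier \<omega> i \<subseteq> V"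
  unfolding nbhd_def using E_in_V by blast

lemma exposed_if_left_end_reached: "e \<in> M \<Longrightarrow> left_end \<omega> e \<in> reached \<omega> i \<Longrightarrow> e \<in> exposed \<omega> i"
proof (induction i)
  case 0
  then show ?case using UL_uncovered left_end_covered[of e \<omega>] by simp
next
  case (Suc i)
  show ?case
  proof (cases "left_end \<omega> e \<in> reached \<omega> i")
    case True
    then show ?thesis using Suc by auto
  next
    case False
    then obtain e' where e': "e' \<in> M" "right_end \<omega> e' \<in> frontier \<omega> i" "left_end \<omega> e = left_end \<omega> e'"
      using Suc by auto
    then have "e = e'" using inj_on_left_end Suc.prems(1) by (metis inj_onD)
    then show ?thesis using e' left_right_end_cases[of \<omega> e'] by auto
  qed
qed

definition explored :: "('a \<times> 'a \<Rightarrow> bool) \<Rightarrow> nat \<Rightarrow> 'a set" where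
  "explored \<omega> i = reached \<omega> i \<union> right_end \<omega> ` {e\<in>M. left_end \<omega> e \<in> reached \<omega> i}"

lemma explored_mono: "i \<le> j \<Longrightarrow> explored \<omega> i \<subseteq> explored \<omega> j"
  unfolding explored_def using reached_mono by blast

lemma matched_ends_not_explored:
  assumes "e \<in> M" "left_end \<omega> e \<notin> reached \<omega> i"
  shows "right_end \<omega> e \<notin> explored \<omega> i" and "left_end \<omega> e \<notin> explored \<omega> i"
proof -
  have "right_end \<omega> e \<notin> reached \<omega> i"
    using reached_subset_L_M L_M_R_M_disjoint assms(1) unfolding R_M_eq by blast
  moreover have "right_end \<omega> e \<notin> right_end \<omega> ` {e\<in>M. left_end \<omega> e \<in> reached \<omega> i}"
    using assms inj_on_right_end by (auto dest: inj_onD)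
  ultimately show "right_end \<omega> e \<notin> explored \<omega> i"
    unfolding explored_def by blast
  show "left_end \<omega> e \<notin> explored \<omega> i"
    using assms left_end_ne_right_end unfolding explored_def by blast
qed

text \<open>The last two conjuncts are the invariant that lets such a path be extended: it avoids
  the vertices not yet explored, and it ends with a matching edge.\<close>
definition search_path :: "('a \<times> 'a \<Rightarrow> bool) \<Rightarrow> nat \<Rightarrow> 'a \<Rightarrow> 'a list \<Rightarrow> bool" where
  "search_path \<omega> i v xs \<longleftrightarrow> path_in (E_M E UL UR M \<omega>) xs \<and> alternating M xs \<and> hd xs \<in> UL
     \<and> last xs = v \<and> walk_length xs \<le> 2 * i \<and> set xs \<subseteq> explored \<omega> i
     \<and> (2 \<le> length xs \<longrightarrow> inM M (xs ! (length xs - 2)) (last xs))"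

lemma search_path_Suc: "search_path \<omega> i v xs \<Longrightarrow> search_path \<omega> (Suc i) v xs"
  using explored_mono[of i "Suc i" \<omega>] unfolding search_path_def by auto

lemma search_path_extend:
  assumes xs: "search_path \<omega> i w xs" and w: "w \<in> reached \<omega> i" "E (right_end \<omega> e) w"
    and e: "e \<in> M" "left_end \<omega> e \<notin> reached \<omega> i"
  shows "search_path \<omega> (Suc i) (left_end \<omega> e) (xs @ [right_end \<omega> e, left_end \<omega> e])"
proof -
  let ?r = "right_end \<omega> e" and ?l = "left_end \<omega> e" and ?H = "E_M E UL UR M \<omega>"
  have walk: "walk_in ?H xs" and "last xs = w" and "xs \<noteq> []" and "distinct xs"
    and "set xs \<subseteq> explored \<omega> i"
    using xs by (auto simp: search_path_def path_in_def walk_in_def)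
  have "?r \<notin> explored \<omega> i" "?l \<notin> explored \<omega> i"
    using matched_ends_not_explored[OF e] by auto
  have "w \<in> L_M UL M \<omega>" "?l \<in> L_M UL M \<omega>" "?r \<in> R_M UR M \<omega>"
    using w(1) reached_subset_L_M e(1) unfolding L_M_eq R_M_eq by auto
  then have "?H w ?r" "?H ?r ?l"
    using w(2) E_sym E_right_left[OF e(1)] unfolding E_M_def by auto
  then have "walk_in ?H ((xs @ [?r]) @ [?l])"
    using walk_in_snoc[OF walk_in_snoc[OF walk]] \<open>last xs = w\<close> by simp
  have "\<not> inM M w ?r"
    using inM_right_end_iff[OF e(1)] w(1) e(2) by auto
  then have "alternating M (xs @ [?r])"
    using alternating_snoc[of M xs ?r] xs \<open>last xs = w\<close> by (auto simp: search_path_def)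
  then have "alternating M ((xs @ [?r]) @ [?l])"
    using alternating_snoc[of M "xs @ [?r]" ?l] \<open>\<not> inM M w ?r\<close> \<open>last xs = w\<close>
      \<open>xs \<noteq> []\<close> last_conv_nth[OF \<open>xs \<noteq> []\<close>] inM_right_left[OF e(1)]
    by (auto simp: nth_append Suc_le_eq)
  moreover have "distinct (xs @ [?r, ?l])"
    using \<open>distinct xs\<close> \<open>set xs \<subseteq> explored \<omega> i\<close> \<open>?r \<notin> explored \<omega> i\<close> \<open>?l \<notin> explored \<omega> i\<close>
      left_end_ne_right_end[OF e(1) e(1), of \<omega>]
    by auto
  moreover have "?r \<in> frontier \<omega> i"
    using w \<open>?r \<notin> explored \<omega> i\<close> unfolding nbhd_def explored_def by blast
  then have "?l \<in> reached \<omega> (Suc i)" using e(1) by simp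
  then have "set (xs @ [?r, ?l]) \<subseteq> explored \<omega> (Suc i)"
    using \<open>set xs \<subseteq> explored \<omega> i\<close> explored_mono[of i "Suc i" \<omega>] e(1)
    unfolding explored_def by auto
  moreover have "walk_length (xs @ [?r, ?l]) \<le> 2 * Suc i" "hd (xs @ [?r, ?l]) \<in> UL"
    using xs \<open>xs \<noteq> []\<close> by (auto simp: search_path_def walk_length_def)
  moreover have "inM M ((xs @ [?r, ?l]) ! (length (xs @ [?r, ?l]) - 2)) ?l"
    using inM_right_left[OF e(1)] by (simp add: nth_append)
  ultimately show ?thesis
    using \<open>walk_in ?H ((xs @ [?r]) @ [?l])\<close> unfolding search_path_def path_in_def by simp
qed

lemma reached_search_path: "v \<in> reached \<omega> i \<Longrightarrow> \<exists>xs. search_path \<omega> i v xs"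
proof (induction i arbitrary: v)
  case 0
  then have "search_path \<omega> 0 v [v]"
    by (simp add: search_path_def path_in_def walk_in_def alternating_def walk_length_def explored_def)
  then show ?case by blast
next
  case (Suc i)
  show ?case
  proof (cases "v \<in> reached \<omega> i")
    case True
    then show ?thesis using Suc.IH search_path_Suc by blast
  next
    case False
    then obtain e where e: "e \<in> M" "right_end \<omega> e \<in> frontier \<omega> i" "v = left_end \<omega> e"
      using Suc.prems by auto
    obtain w where w: "w \<in> reached \<omega> i" "E (right_end \<omega> e) w"
      using e(2) unfolding nbhd_def by auto
    with Suc.IH[OF w(1)] search_path_extend[of \<omega> i w _ e] e False show ?thesis by blast
  qed
qed

text \<open>A frontier vertex outside \<open>covered M\<close> would lie in \<open>UR\<close> and end an augmenting path.\<close>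
lemma frontier_covered:
  assumes no_augmenting: "\<not> (\<exists>xs. augmenting_path E M xs \<and> hd xs \<in> UL \<and> last xs \<in> UR
                              \<and> walk_length xs \<le> 2 * i + 1)"
  shows "frontier \<omega> i \<subseteq> covered M"
proof
  fix u assume u: "u \<in> frontier \<omega> i"
  show "u \<in> covered M"
  proof (rule ccontr)
    assume uncovered: "u \<notin> covered M"
    obtain w where w: "w \<in> reached \<omega> i" "E u w" and "u \<notin> reached \<omega> i"
      using u unfolding nbhd_def by auto
    then have "u \<in> UR" using uncovered frontier_subset_V u UL_subset_reached split_union by blast
    obtain xs where xs: "search_path \<omega> i w xs" using reached_search_path w(1) by blast
    then have "walk_in (E_M E UL UR M \<omega>) xs" "last xs = w"
      by (auto simp: search_path_def path_in_def)
    then have "walk_in E (xs @ [u])"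
      using walk_in_snoc[OF walk_in_mono[of "E_M E UL UR M \<omega>" E]] w(2) E_sym by (auto simp: E_M_def)
    moreover have "u \<notin> set xs"
      using xs \<open>u \<notin> reached \<omega> i\<close> uncovered right_end_covered
      by (auto simp: search_path_def explored_def)
    moreover have "\<not> inM M w u"
      using uncovered covered_iff unfolding inM_def by force
    then have "alternating M (xs @ [u])"
      using alternating_snoc[of M xs u] xs \<open>last xs = w\<close> by (auto simp: search_path_def)
    ultimately have "augmenting_path E M (xs @ [u])"
      using xs uncovered UL_uncovered
      by (auto simp: augmenting_path_def path_in_def search_path_def walk_in_def)
    moreover have "walk_length (xs @ [u]) \<le> 2 * i + 1"
      using xs by (auto simp: search_path_def walk_length_def)
    ultimately show False
      using no_augmenting \<open>u \<in> UR\<close> xs by (auto simp: search_path_def walk_in_def path_in_def)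
  qed
qed


definition fresh :: "('a \<times> 'a \<Rightarrow> bool) \<Rightarrow> nat \<Rightarrow> ('a \<times> 'a) set" where
  "fresh \<omega> i = {e\<in>M. (fst e \<in> frontier \<omega> i \<or> snd e \<in> frontier \<omega> i) \<and> e \<notin> exposed \<omega> i}"

definition fresh_inner :: "('a \<times> 'a \<Rightarrow> bool) \<Rightarrow> nat \<Rightarrow> ('a \<times> 'a) set" where
  "fresh_inner \<omega> i = {e\<in>fresh \<omega> i. fst e \<in> frontier \<omega> i \<and> snd e \<in> frontier \<omega> i}"

definition fresh_boundary :: "('a \<times> 'a \<Rightarrow> bool) \<Rightarrow> nat \<Rightarrow> ('a \<times> 'a) set" where
  "fresh_boundary \<omega> i = {e\<in>fresh \<omega> i. \<not> (fst e \<in> frontier \<omega> i \<and> snd e \<in> frontier \<omega> i)}"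

text \<open>A boundary edge is captured when \<open>\<omega>\<close> puts its frontier end on the right,
  so that its other end is reached in the next step.\<close>
definition captured :: "('a \<times> 'a \<Rightarrow> bool) \<Rightarrow> nat \<Rightarrow> ('a \<times> 'a) set" where
  "captured \<omega> i = {e\<in>fresh_boundary \<omega> i. \<omega> e = (fst e \<in> frontier \<omega> i)}"

definition stalled :: "('a \<times> 'a \<Rightarrow> bool) \<Rightarrow> nat \<Rightarrow> ('a \<times> 'a) set" where
  "stalled \<omega> i = {e\<in>exposed \<omega> i. left_end \<omega> e \<notin> reached \<omega> i}"

definition revived :: "('a \<times> 'a \<Rightarrow> bool) \<Rightarrow> nat \<Rightarrow> ('a \<times> 'a) set" where
  "revived \<omega> i = {e\<in>stalled \<omega> i. right_end \<omega> e \<in> frontier \<omega> i}"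

definition slack :: "('a \<times> 'a \<Rightarrow> bool) \<Rightarrow> nat \<Rightarrow> nat" where
  "slack \<omega> i = 2 * card (revived \<omega> i) + 2 * card (fresh_inner \<omega> i)"

lemma fresh_subset_M: "fresh \<omega> i \<subseteq> M"
  and fresh_inner_subset: "fresh_inner \<omega> i \<subseteq> fresh \<omega> i"
  and fresh_boundary_subset: "fresh_boundary \<omega> i \<subseteq> fresh \<omega> i"
  and captured_subset: "captured \<omega> i \<subseteq> fresh_boundary \<omega> i"
  and stalled_subset: "stalled \<omega> i \<subseteq> exposed \<omega> i"
  and revived_subset: "revived \<omega> i \<subseteq> stalled \<omega> i"
  by (auto simp: fresh_def fresh_inner_def fresh_boundary_def captured_def stalled_def revived_def)

lemma step_sets_subset_M:
  "fresh_inner \<omega> i \<subseteq> M" "fresh_boundary \<omega> i \<subseteq> M" "captured \<omega> i \<subseteq> M"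
  "stalled \<omega> i \<subseteq> M" "revived \<omega> i \<subseteq> M"
  using exposed_subset_M
  by (auto simp: fresh_def fresh_inner_def fresh_boundary_def captured_def stalled_def revived_def)

lemma fresh_not_exposed: "e \<in> fresh \<omega> i \<Longrightarrow> e \<notin> exposed \<omega> i"
  by (simp add: fresh_def)

lemma fresh_subset_exposed_Suc: "fresh \<omega> i \<subseteq> exposed \<omega> (Suc i)"
  by (auto simp: fresh_def)

lemmas finite_step_sets = step_sets_subset_M[THEN finite_subset, OF finite_M]

lemma left_end_not_reached:
  assumes "e \<in> fresh \<omega> i \<union> stalled \<omega> i"
  shows "left_end \<omega> e \<notin> reached \<omega> i"
proof
  assume reached: "left_end \<omega> e \<in> reached \<omega> i"
  show False
  proof (cases "e \<in> fresh \<omega> i")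
    case True
    then have "e \<in> exposed \<omega> i"
      using reached fresh_subset_M by (intro exposed_if_left_end_reached) auto
    then show False using fresh_not_exposed[OF True] by blast
  next
    case False
    then show False using assms reached by (simp add: stalled_def)
  qed
qed

lemma right_end_in_frontier:
  "e \<in> fresh_inner \<omega> i \<union> captured \<omega> i \<union> revived \<omega> i \<Longrightarrow> right_end \<omega> e \<in> frontier \<omega> i"
  by (auto simp: fresh_inner_def captured_def fresh_boundary_def fresh_def revived_def right_end_def
      split: if_splits)

lemma card_reached_Suc_ge:
  "card (reached \<omega> i) + card (fresh_inner \<omega> i) + card (captured \<omega> i) + card (revived \<omega> i)
     \<le> card (reached \<omega> (Suc i))"
proof -
  define Z where "Z = fresh_inner \<omega> i \<union> captured \<omega> i \<union> revived \<omega> i"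
  have "Z \<subseteq> M"
    using step_sets_subset_M unfolding Z_def by blast
  have "fresh_inner \<omega> i \<inter> captured \<omega> i = {}"
    by (auto simp: fresh_inner_def captured_def fresh_boundary_def)
  moreover have "(fresh_inner \<omega> i \<union> captured \<omega> i) \<inter> revived \<omega> i = {}"
    using fresh_inner_subset captured_subset fresh_boundary_subset fresh_not_exposed
      revived_subset stalled_subset by blast
  ultimately have card_Z: "card Z = card (fresh_inner \<omega> i) + card (captured \<omega> i) + card (revived \<omega> i)"
    using finite_step_sets unfolding Z_def by (simp add: card_Un_disjoint)
  have "finite Z" using finite_subset[OF \<open>Z \<subseteq> M\<close> finite_M] .
  have new: "left_end \<omega> ` Z \<subseteq> reached \<omega> (Suc i)"
    using right_end_in_frontier \<open>Z \<subseteq> M\<close> unfolding Z_def by auto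
  have "Z \<subseteq> fresh \<omega> i \<union> stalled \<omega> i"
    using fresh_inner_subset captured_subset fresh_boundary_subset revived_subset
    unfolding Z_def by blast
  then have "reached \<omega> i \<inter> left_end \<omega> ` Z = {}"
    using left_end_not_reached by blast
  then have "card (reached \<omega> i) + card (left_end \<omega> ` Z) = card (reached \<omega> i \<union> left_end \<omega> ` Z)"
    using \<open>finite Z\<close> finite_reached by (simp add: card_Un_disjoint)
  also have "\<dots> \<le> card (reached \<omega> (Suc i))"
    using new reached_mono[of i "Suc i" \<omega>] by (intro card_mono[OF finite_reached]) auto
  finally show ?thesis
    using card_Z card_image[OF inj_on_subset[OF inj_on_left_end \<open>Z \<subseteq> M\<close>]] by simp
qed

lemma card_stalled_Suc_le:
  "card (stalled \<omega> (Suc i)) + card (revived \<omega> i) + card (captured \<omega> i)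
     \<le> card (stalled \<omega> i) + card (fresh_boundary \<omega> i)"
proof -
  have "stalled \<omega> (Suc i) \<subseteq> (stalled \<omega> i - revived \<omega> i) \<union> (fresh_boundary \<omega> i - captured \<omega> i)"
  proof
    fix e assume e: "e \<in> stalled \<omega> (Suc i)"
    then have "e \<in> M" "left_end \<omega> e \<notin> reached \<omega> i" "right_end \<omega> e \<notin> frontier \<omega> i"
      using exposed_subset_M by (auto simp: stalled_def)
    then show "e \<in> (stalled \<omega> i - revived \<omega> i) \<union> (fresh_boundary \<omega> i - captured \<omega> i)"
      using e right_end_in_frontier[of e \<omega> i]
      by (auto simp: stalled_def revived_def fresh_boundary_def fresh_inner_def fresh_def)
  qed
  then have "card (stalled \<omega> (Suc i))
      \<le> card ((stalled \<omega> i - revived \<omega> i) \<union> (fresh_boundary \<omega> i - captured \<omega> i))"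
    using finite_step_sets by (intro card_mono) auto
  also have "\<dots> \<le> card (stalled \<omega> i - revived \<omega> i) + card (fresh_boundary \<omega> i - captured \<omega> i)"
    by (rule card_Un_le)
  finally have "card (stalled \<omega> (Suc i))
      \<le> card (stalled \<omega> i - revived \<omega> i) + card (fresh_boundary \<omega> i - captured \<omega> i)" .
  moreover have "card (stalled \<omega> i - revived \<omega> i) = card (stalled \<omega> i) - card (revived \<omega> i)"
      "card (fresh_boundary \<omega> i - captured \<omega> i) = card (fresh_boundary \<omega> i) - card (captured \<omega> i)"
    using finite_step_sets revived_subset captured_subset by (simp_all add: card_Diff_subset)
  moreover have "card (revived \<omega> i) \<le> card (stalled \<omega> i)"
      "card (captured \<omega> i) \<le> card (fresh_boundary \<omega> i)"
    using finite_step_sets revived_subset captured_subset by (simp_all add: card_mono)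
  ultimately show ?thesis by linarith
qed

text \<open>The frontier is matched; split according to whether its matching edge is fresh,
  exposed with reached left end, or stalled.\<close>
lemma frontier_subset_ends:
  assumes "frontier \<omega> i \<subseteq> covered M"
  shows "frontier \<omega> i \<subseteq> fst ` fresh_inner \<omega> i \<union> snd ` fresh_inner \<omega> i
           \<union> (\<lambda>e. if fst e \<in> frontier \<omega> i then fst e else snd e) ` fresh_boundary \<omega> i
           \<union> right_end \<omega> ` {e\<in>M. left_end \<omega> e \<in> reached \<omega> i - UL}
           \<union> left_end \<omega> ` stalled \<omega> i \<union> right_end \<omega> ` revived \<omega> i"
proof
  fix u assume u: "u \<in> frontier \<omega> i"
  then obtain e where e: "e \<in> M" "u = fst e \<or> u = snd e"
    using assms covered_iff by blast
  have "u \<notin> reached \<omega> i" using u unfolding nbhd_def by auto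
  consider "e \<notin> exposed \<omega> i" | "e \<in> exposed \<omega> i" "left_end \<omega> e \<in> reached \<omega> i"
    | "e \<in> stalled \<omega> i" by (auto simp: stalled_def)
  then show "u \<in> fst ` fresh_inner \<omega> i \<union> snd ` fresh_inner \<omega> i
           \<union> (\<lambda>e. if fst e \<in> frontier \<omega> i then fst e else snd e) ` fresh_boundary \<omega> i
           \<union> right_end \<omega> ` {e\<in>M. left_end \<omega> e \<in> reached \<omega> i - UL}
           \<union> left_end \<omega> ` stalled \<omega> i \<union> right_end \<omega> ` revived \<omega> i"
  proof cases
    case 1
    show ?thesis
    proof (cases "fst e \<in> frontier \<omega> i \<and> snd e \<in> frontier \<omega> i")
      case True
      then have "e \<in> fresh_inner \<omega> i" using 1 e by (auto simp: fresh_inner_def fresh_def)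
      then show ?thesis using e(2) by blast
    next
      case False
      then have "e \<in> fresh_boundary \<omega> i" using 1 e u by (auto simp: fresh_boundary_def fresh_def)
      moreover have "u = (if fst e \<in> frontier \<omega> i then fst e else snd e)" using False e(2) u by auto
      ultimately show ?thesis by blast
    qed
  next
    case 2
    then have "u = right_end \<omega> e"
      using e \<open>u \<notin> reached \<omega> i\<close> left_right_end_cases[of \<omega> e] by auto
    moreover have "left_end \<omega> e \<notin> UL" using left_end_covered[OF e(1)] UL_uncovered by blast
    ultimately show ?thesis using e 2 by blast
  next
    case 3
    consider "u = left_end \<omega> e" | "u = right_end \<omega> e"
      using e left_right_end_cases[of \<omega> e] by auto
    then show ?thesis
    proof cases
      case 2
      then have "e \<in> revived \<omega> i" using 3 u by (simp add: revived_def)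
      then show ?thesis using 2 by blast
    qed (use 3 in blast)
  qed
qed

lemma card_frontier_le:
  assumes "frontier \<omega> i \<subseteq> covered M"
  shows "card (frontier \<omega> i) \<le> 2 * card (fresh_inner \<omega> i) + card (fresh_boundary \<omega> i)
           + (card (reached \<omega> i) - card UL) + card (stalled \<omega> i) + card (revived \<omega> i)"
proof -
  let ?W = "{e\<in>M. left_end \<omega> e \<in> reached \<omega> i - UL}"
  have "card ?W = card (left_end \<omega> ` ?W)"
    using inj_on_subset[OF inj_on_left_end] by (intro card_image[symmetric]) auto
  also have "\<dots> \<le> card (reached \<omega> i - UL)"
    using finite_reached by (intro card_mono) auto
  also have "\<dots> = card (reached \<omega> i) - card UL"
    using card_Diff_subset[OF finite_subset[OF UL_subset_reached finite_reached] UL_subset_reached] .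
  finally have W: "card ?W \<le> card (reached \<omega> i) - card UL" .
  have "finite ?W" using finite_M by simp
  let ?ends = "(\<lambda>e. if fst e \<in> frontier \<omega> i then fst e else snd e) ` fresh_boundary \<omega> i"
  have "card (frontier \<omega> i) \<le> card (fst ` fresh_inner \<omega> i \<union> snd ` fresh_inner \<omega> i \<union> ?ends
           \<union> right_end \<omega> ` ?W \<union> left_end \<omega> ` stalled \<omega> i \<union> right_end \<omega> ` revived \<omega> i)"
    using frontier_subset_ends[OF assms] finite_step_sets \<open>finite ?W\<close> by (intro card_mono) auto
  also have "\<dots> \<le> card (fst ` fresh_inner \<omega> i) + card (snd ` fresh_inner \<omega> i) + card ?ends
           + card (right_end \<omega> ` ?W) + card (left_end \<omega> ` stalled \<omega> i) + card (right_end \<omega> ` revived \<omega> i)"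
    by (intro order.trans[OF card_Un_le] add_mono order.refl)+
  also have "\<dots> \<le> card (fresh_inner \<omega> i) + card (fresh_inner \<omega> i) + card (fresh_boundary \<omega> i)
           + card ?W + card (stalled \<omega> i) + card (revived \<omega> i)"
    by (intro add_mono card_image_le finite_step_sets \<open>finite ?W\<close>)
  finally show ?thesis using W by linarith
qed


section \<open>Rounds depend only on exposed coordinates\<close>

lemma reached_exposed_cong:
  assumes agree: "\<forall>e\<in>exposed \<omega> i. \<omega>' e = \<omega> e" and "j \<le> i"
  shows "reached \<omega>' j = reached \<omega> j \<and> exposed \<omega>' j = exposed \<omega> j"
  using \<open>j \<le> i\<close>
proof (induction j)
  case 0
  then show ?case by simp
next
  case (Suc j)
  then have IH: "reached \<omega>' j = reached \<omega> j" "exposed \<omega>' j = exposed \<omega> j" by auto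
  have agree_j: "\<omega>' e = \<omega> e" if "e \<in> M" "fst e \<in> frontier \<omega> j \<or> snd e \<in> frontier \<omega> j" for e
    using that agree exposed_mono[OF Suc.prems] by auto
  have touches: "fst e \<in> frontier \<omega> j \<or> snd e \<in> frontier \<omega> j" if "right_end \<omega>0 e \<in> frontier \<omega> j" for e \<omega>0
    using that left_right_end_cases[of \<omega>0 e] by auto
  have "right_end \<omega>' e = right_end \<omega> e" "left_end \<omega>' e = left_end \<omega> e"
    if "e \<in> M" "right_end \<omega>' e \<in> frontier \<omega> j \<or> right_end \<omega> e \<in> frontier \<omega> j" for e
    using agree_j[OF that(1)] touches that(2) by (auto simp: left_end_def right_end_def)
  note ends = this
  have "{e\<in>M. right_end \<omega>' e \<in> frontier \<omega> j} = {e\<in>M. right_end \<omega> e \<in> frontier \<omega> j}"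
    by (intro Collect_cong) (metis ends(1))
  moreover have "left_end \<omega>' ` {e\<in>M. right_end \<omega> e \<in> frontier \<omega> j}
      = left_end \<omega> ` {e\<in>M. right_end \<omega> e \<in> frontier \<omega> j}"
    using ends(2) by (intro image_cong) auto
  ultimately show ?case using IH by simp
qed

lemma step_sets_cong:
  assumes agree: "\<forall>e\<in>exposed \<omega> i. \<omega>' e = \<omega> e" and "j \<le> i"
  shows "fresh_boundary \<omega>' j = fresh_boundary \<omega> j" and "slack \<omega>' j = slack \<omega> j"
proof -
  have reached: "reached \<omega>' j = reached \<omega> j" and exposed: "exposed \<omega>' j = exposed \<omega> j"
    using reached_exposed_cong[OF agree \<open>j \<le> i\<close>] by auto
  have agree_j: "\<forall>e\<in>exposed \<omega> j. \<omega>' e = \<omega> e"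
    using agree exposed_mono[OF \<open>j \<le> i\<close>] by blast
  have stalled: "stalled \<omega>' j = stalled \<omega> j"
    unfolding stalled_def reached exposed using agree_j by (auto simp: left_end_def)
  have "revived \<omega>' j = revived \<omega> j"
    unfolding revived_def stalled reached using agree_j stalled_subset[of \<omega> j]
    by (auto simp: right_end_def)
  moreover have "fresh \<omega>' j = fresh \<omega> j"
    unfolding fresh_def reached exposed ..
  ultimately show "fresh_boundary \<omega>' j = fresh_boundary \<omega> j" "slack \<omega>' j = slack \<omega> j"
    unfolding fresh_boundary_def slack_def fresh_inner_def reached by simp_all
qed

lemma captured_cong:
  assumes agree: "\<forall>e\<in>exposed \<omega> i. \<omega>' e = \<omega> e" and "j < i"
  shows "captured \<omega>' j = captured \<omega> j"
proof -
  have "fresh_boundary \<omega> j \<subseteq> exposed \<omega> i"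
    using fresh_boundary_subset[of \<omega> j] fresh_subset_exposed_Suc[of \<omega> j]
      exposed_mono[of "Suc j" i \<omega>] \<open>j < i\<close> by auto
  moreover have "fresh_boundary \<omega>' j = fresh_boundary \<omega> j" "reached \<omega>' j = reached \<omega> j"
    using step_sets_cong(1)[OF agree] reached_exposed_cong[OF agree] \<open>j < i\<close> by auto
  ultimately show ?thesis
    using agree unfolding captured_def by auto
qed

end

section \<open>Growth of the reached set and the failure probability\<close>

locale expanding_split = matching_split +
  fixes \<beta> \<alpha> :: real and t :: nat
  assumes expansion: "\<forall>S. S \<subseteq> V \<and> real (card S) \<le> \<beta> \<longrightarrow> real (card (nbhd E S)) \<ge> \<alpha> * real (card S)"
    and alpha: "\<alpha> \<ge> 10"
    and no_short_augmenting: "\<not> (\<exists>xs. augmenting_path E M xs \<and> hd xs \<in> UL \<and> last xs \<in> UR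
                                     \<and> walk_length xs \<le> 2 * t + 1)"
    and UL_nonempty: "0 < card UL"
    and t_large: "\<beta> + 1 \<le> (\<alpha> / 4) ^ t * card UL"
begin

lemma frontier_covered_upto_t: "i \<le> t \<Longrightarrow> frontier \<omega> i \<subseteq> covered M"
  using no_short_augmenting by (intro frontier_covered) auto

lemma expansion_frontier:
  "real (card (reached \<omega> i)) \<le> \<beta> \<Longrightarrow> \<alpha> * real (card (reached \<omega> i)) \<le> real (card (frontier \<omega> i))"
  using expansion reached_subset_V by blast

definition good_step :: "('a \<times> 'a \<Rightarrow> bool) \<Rightarrow> nat \<Rightarrow> bool" where
  "good_step \<omega> j \<longleftrightarrow> \<beta> < card (reached \<omega> j)
     \<or> card (fresh_boundary \<omega> j) \<le> 4 * card (captured \<omega> j) + slack \<omega> j"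

definition alive :: "('a \<times> 'a \<Rightarrow> bool) \<Rightarrow> nat \<Rightarrow> bool" where
  "alive \<omega> i \<longleftrightarrow> (\<forall>j<i. good_step \<omega> j) \<and> real (card (reached \<omega> i)) \<le> \<beta>"

lemma alive_mono:
  assumes "alive \<omega> i" "j \<le> i" shows "alive \<omega> j"
proof -
  have "card (reached \<omega> j) \<le> card (reached \<omega> i)"
    using reached_mono[OF \<open>j \<le> i\<close>] finite_reached by (rule card_mono[rotated])
  then show ?thesis using assms unfolding alive_def by force
qed

lemma alive_Suc_step:
  assumes "alive \<omega> (Suc i)"
  shows "card (fresh_boundary \<omega> i) \<le> 4 * card (captured \<omega> i) + slack \<omega> i"
  using assms alive_mono[OF assms, of i] unfolding alive_def good_step_def by auto

text \<open>The potential argument: the stalled edges stay below \<open>3 |S\<^sub>i|\<close>, so the expansion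
  of \<open>S\<^sub>i\<close> is paid for by new reached vertices.\<close>
lemma reached_growth:
  assumes "alive \<omega> i" "i \<le> t"
  shows "real (card (stalled \<omega> i)) \<le> 3 * real (card (reached \<omega> i))
    \<and> (\<alpha> / 4) ^ i * card UL \<le> card (reached \<omega> i)"
  using assms
proof (induction i)
  case 0
  then show ?case by (simp add: stalled_def)
next
  case (Suc i)
  have IH: "real (card (stalled \<omega> i)) \<le> 3 * real (card (reached \<omega> i))"
      "(\<alpha> / 4) ^ i * card UL \<le> card (reached \<omega> i)"
    using Suc alive_mono[OF Suc.prems(1), of i] by auto
  have "real (card (reached \<omega> i)) \<le> \<beta>"
    using alive_mono[OF Suc.prems(1), of i] by (simp add: alive_def)
  then have expand: "\<alpha> * card (reached \<omega> i) \<le> card (frontier \<omega> i)"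
    by (rule expansion_frontier)
  have "card UL \<le> card (reached \<omega> i)"
    using UL_subset_reached finite_reached by (rule card_mono[rotated])
  then have frontier: "real (card (frontier \<omega> i)) \<le> 2 * card (fresh_inner \<omega> i) + card (fresh_boundary \<omega> i)
      + card (reached \<omega> i) + card (stalled \<omega> i) + card (revived \<omega> i)"
    using card_frontier_le[OF frontier_covered_upto_t, of i \<omega>] Suc.prems(2) by linarith
  have reached: "real (card (reached \<omega> i)) + card (fresh_inner \<omega> i) + card (captured \<omega> i)
      + card (revived \<omega> i) \<le> card (reached \<omega> (Suc i))"
    using card_reached_Suc_ge[of \<omega> i] by linarith
  have stalled: "real (card (stalled \<omega> (Suc i))) + card (revived \<omega> i) + card (captured \<omega> i)
      \<le> card (stalled \<omega> i) + card (fresh_boundary \<omega> i)"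
    using card_stalled_Suc_le[of \<omega> i] by linarith
  have good: "real (card (fresh_boundary \<omega> i))
      \<le> 4 * card (captured \<omega> i) + 2 * card (revived \<omega> i) + 2 * card (fresh_inner \<omega> i)"
    using alive_Suc_step[OF Suc.prems(1)] unfolding slack_def by linarith
  have step: "\<alpha> * card (reached \<omega> i) \<le> 4 * card (reached \<omega> (Suc i))"
    using IH expand frontier reached good by linarith
  have "(\<alpha> / 4) ^ Suc i * card UL = (\<alpha> / 4) * ((\<alpha> / 4) ^ i * card UL)"
    by simp
  also have "\<dots> \<le> (\<alpha> / 4) * card (reached \<omega> i)"
    using IH(2) alpha by (intro mult_left_mono) auto
  also have "\<dots> \<le> card (reached \<omega> (Suc i))"
    using step by linarith
  finally show ?case using IH(1) stalled reached good by linarith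
qed

lemma step_weight_le:
  assumes "alive \<omega> i" "i < t"
  shows "step_weight i \<le> card (fresh_boundary \<omega> i) + slack \<omega> i"
proof -
  have growth: "real (card (stalled \<omega> i)) \<le> 3 * real (card (reached \<omega> i))"
      "(\<alpha> / 4) ^ i * card UL \<le> card (reached \<omega> i)"
    using reached_growth[OF assms(1)] assms(2) by auto
  have "real (card (reached \<omega> i)) \<le> \<beta>" using assms(1) by (simp add: alive_def)
  then have expand: "\<alpha> * card (reached \<omega> i) \<le> card (frontier \<omega> i)"
    by (rule expansion_frontier)
  have "card UL \<le> card (reached \<omega> i)"
    using UL_subset_reached finite_reached by (rule card_mono[rotated])
  then have "real (card (frontier \<omega> i)) \<le> 2 * card (fresh_inner \<omega> i) + card (fresh_boundary \<omega> i)
      + (real (card (reached \<omega> i)) - card UL) + card (stalled \<omega> i) + card (revived \<omega> i)"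
    using card_frontier_le[OF frontier_covered_upto_t, of i \<omega>] assms(2) by (simp add: of_nat_diff)
  then have key: "\<alpha> * card (reached \<omega> i) + card UL \<le> real (card (fresh_boundary \<omega> i)) + real (slack \<omega> i)
      + card (reached \<omega> i) + card (stalled \<omega> i)"
    using expand unfolding slack_def by linarith
  show ?thesis
  proof (cases "i = 0")
    case True
    have "1 \<le> real (card UL)" using UL_nonempty by simp
    then have "10 \<le> \<alpha> * card UL" using alpha mult_mono[of 10 \<alpha> 1 "real (card UL)"] by simp
    then show ?thesis using True key by (simp add: stalled_def step_weight_def)
  next
    case False
    have "real i + 1 < (5/2) ^ i" using False by (simp add: Suc_less_five_halves_power)
    also have "\<dots> \<le> (\<alpha> / 4) ^ i" using alpha by (intro power_mono) auto
    also have "\<dots> \<le> (\<alpha> / 4) ^ i * card UL" using UL_nonempty alpha by simp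
    also have "\<dots> \<le> card (reached \<omega> i)" by (rule growth(2))
    finally have "real (i + 1) < card (reached \<omega> i)" by simp
    then have "i + 1 < card (reached \<omega> i)" by (simp only: of_nat_less_iff)
    then have "real i + 2 \<le> card (reached \<omega> i)" by simp
    moreover have "10 * real (card (reached \<omega> i)) \<le> \<alpha> * card (reached \<omega> i)"
      using alpha by (intro mult_right_mono) auto
    ultimately have "6 * (real i + 2) \<le> real (card (fresh_boundary \<omega> i)) + real (slack \<omega> i)"
      using key growth(1) of_nat_0_le_iff[of "card UL", where 'a=real] by argo
    then have "real (6 * (i + 2)) \<le> real (card (fresh_boundary \<omega> i) + slack \<omega> i)"
      by simp
    then show ?thesis using False unfolding step_weight_def by (simp only: of_nat_le_iff if_False)
  qed
qed


lemma alive_cong: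
  assumes "\<forall>e\<in>exposed \<omega> i. \<omega>' e = \<omega> e"
  shows "alive \<omega>' i = alive \<omega> i"
proof -
  have "good_step \<omega>' j = good_step \<omega> j" if "j < i" for j
    using that step_sets_cong[OF assms, of j] captured_cong[OF assms that]
      reached_exposed_cong[OF assms, of j]
    by (simp add: good_step_def)
  then show ?thesis
    using reached_exposed_cong[OF assms order.refl] by (simp add: alive_def)
qed

definition bad_step :: "nat \<Rightarrow> ('a \<times> 'a \<Rightarrow> bool) set" where
  "bad_step i = {\<omega> \<in> M \<rightarrow>\<^sub>E UNIV. alive \<omega> i
     \<and> 4 * card (captured \<omega> i) + slack \<omega> i < card (fresh_boundary \<omega> i)}"

text \<open>Given everything exposed before step \<open>i\<close>, the orientations of the boundary edges are
  still fair coins, and too few of them are captured only with tiny probability.\<close>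
lemma card_bad_step_le:
  assumes "i < t"
  shows "real (card (bad_step i)) \<le> (337/384) ^ step_weight i * card (M \<rightarrow>\<^sub>E (UNIV :: bool set))"
  unfolding bad_step_def captured_def
proof (rule card_exposure_event_le[where D = "\<lambda>\<omega>. exposed \<omega> i" and B = "\<lambda>\<omega>. fresh_boundary \<omega> i"
      and c = "\<lambda>\<omega> e. fst e \<in> frontier \<omega> i" and Q = "\<lambda>\<omega>. alive \<omega> i"
      and P = "\<lambda>\<omega> k. 4 * k + slack \<omega> i < card (fresh_boundary \<omega> i)", OF finite_M])
  show "fresh_boundary \<omega> i \<subseteq> M \<and> fresh_boundary \<omega> i \<inter> exposed \<omega> i = {}" for \<omega>
    using step_sets_subset_M(2)[of \<omega> i] fresh_boundary_subset[of \<omega> i] fresh_not_exposed[of _ \<omega> i]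
    by blast
next
  fix \<omega> \<omega>' assume agree: "\<forall>e\<in>exposed \<omega> i. \<omega>' e = \<omega> e"
  show "exposed \<omega>' i = exposed \<omega> i \<and> fresh_boundary \<omega>' i = fresh_boundary \<omega> i
      \<and> (\<lambda>e. fst e \<in> frontier \<omega>' i) = (\<lambda>e. fst e \<in> frontier \<omega> i)
      \<and> (\<lambda>k. 4 * k + slack \<omega>' i < card (fresh_boundary \<omega>' i))
        = (\<lambda>k. 4 * k + slack \<omega> i < card (fresh_boundary \<omega> i))
      \<and> alive \<omega>' i = alive \<omega> i"
    using reached_exposed_cong[OF agree order.refl] step_sets_cong[OF agree order.refl]
      alive_cong[OF agree] by simp
next
  fix \<omega> assume "alive \<omega> i"
  then have "step_weight i \<le> card (fresh_boundary \<omega> i) + slack \<omega> i"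
    using step_weight_le \<open>i < t\<close> by blast
  then have "(337/384::real) ^ (card (fresh_boundary \<omega> i) + slack \<omega> i) \<le> (337/384) ^ step_weight i"
    by (rule power_decreasing) auto
  then show "real (card {T. T \<subseteq> fresh_boundary \<omega> i \<and> 4 * card T + slack \<omega> i < card (fresh_boundary \<omega> i)})
      \<le> (337/384) ^ step_weight i * 2 ^ card (fresh_boundary \<omega> i)"
    by (intro order.trans[OF card_sparse_subsets_le[OF finite_step_sets(2)]] mult_right_mono) auto
qed simp

definition success :: "('a \<times> 'a \<Rightarrow> bool) set" where
  "success = {\<omega>. \<exists>S \<subseteq> L_M UL M \<omega>. real (card S) > \<beta> \<and>
     (\<forall>v\<in>S. \<exists>xs. path_in (E_M E UL UR M \<omega>) xs \<and> alternating M xs \<and> hd xs \<in> UL \<and> last xs = v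
        \<and> walk_length xs \<le> 2 * t)}"

lemma success_if_reached_large:
  assumes "j \<le> t" "\<beta> < card (reached \<omega> j)"
  shows "\<omega> \<in> success"
  unfolding success_def
proof (intro CollectI exI[of _ "reached \<omega> j"] conjI ballI)
  show "reached \<omega> j \<subseteq> L_M UL M \<omega>" by (rule reached_subset_L_M)
  fix v assume "v \<in> reached \<omega> j"
  then obtain xs where "search_path \<omega> j v xs" using reached_search_path by blast
  then have "path_in (E_M E UL UR M \<omega>) xs \<and> alternating M xs \<and> hd xs \<in> UL \<and> last xs = v
      \<and> walk_length xs \<le> 2 * t"
    using \<open>j \<le> t\<close> unfolding search_path_def by auto
  then show "\<exists>xs. path_in (E_M E UL UR M \<omega>) xs \<and> alternating M xs \<and> hd xs \<in> UL \<and> last xs = v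
      \<and> walk_length xs \<le> 2 * t" by blast
qed (rule assms(2))

lemma not_alive_at_t: "\<not> alive \<omega> t"
proof
  assume "alive \<omega> t"
  then have "(\<alpha> / 4) ^ t * card UL \<le> card (reached \<omega> t)" "real (card (reached \<omega> t)) \<le> \<beta>"
    using reached_growth by (auto simp: alive_def)
  then show False using t_large by linarith
qed

lemma failure_subset_bad_steps: "(M \<rightarrow>\<^sub>E UNIV) - success \<subseteq> (\<Union>i<t. bad_step i)"
proof
  fix \<omega> assume \<omega>: "\<omega> \<in> (M \<rightarrow>\<^sub>E UNIV) - success"
  then have small: "real (card (reached \<omega> j)) \<le> \<beta>" if "j \<le> t" for j
    using success_if_reached_large that by force
  show "\<omega> \<in> (\<Union>i<t. bad_step i)"
  proof (rule ccontr)
    assume no_bad: "\<omega> \<notin> (\<Union>i<t. bad_step i)"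
    have "alive \<omega> j" if "j \<le> t" for j
      using that
    proof (induction j)
      case 0
      then show ?case using small[of 0] by (simp add: alive_def)
    next
      case (Suc j)
      then have "alive \<omega> j" "\<omega> \<notin> bad_step j" using no_bad by auto
      then have "good_step \<omega> j" using \<omega> by (auto simp: bad_step_def good_step_def)
      then show ?case
        using \<open>alive \<omega> j\<close> small[OF Suc.prems] by (auto simp: alive_def less_Suc_eq)
    qed
    then show False using not_alive_at_t by blast
  qed
qed

lemma card_failure_less_half:
  "real (card ((M \<rightarrow>\<^sub>E UNIV) - success)) < card (M \<rightarrow>\<^sub>E (UNIV :: bool set)) / 2"
proof -
  let ?\<Omega> = "M \<rightarrow>\<^sub>E (UNIV :: bool set)"
  have "finite ?\<Omega>" "?\<Omega> \<noteq> {}" using finite_M by (auto simp: finite_PiE PiE_eq_empty_iff)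
  then have "0 < card ?\<Omega>" by (simp add: card_gt_0_iff)
  have "card (?\<Omega> - success) \<le> card (\<Union>i<t. bad_step i)"
    using failure_subset_bad_steps \<open>finite ?\<Omega>\<close> by (intro card_mono) (auto simp: bad_step_def)
  also have "\<dots> \<le> (\<Sum>i<t. card (bad_step i))"
    by (rule card_UN_le) simp
  finally have "real (card (?\<Omega> - success)) \<le> (\<Sum>i<t. real (card (bad_step i)))"
    by (metis of_nat_le_iff of_nat_sum)
  also have "\<dots> \<le> (\<Sum>i<t. (337/384) ^ step_weight i * card ?\<Omega>)"
    using card_bad_step_le by (intro sum_mono) auto
  also have "\<dots> = (\<Sum>i<t. (337/384::real) ^ step_weight i) * card ?\<Omega>"
    by (simp add: sum_distrib_right)
  also have "\<dots> < 1/2 * card ?\<Omega>"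
    using sum_step_weight_less_half \<open>0 < card ?\<Omega>\<close> by (intro mult_strict_right_mono) auto
  finally show ?thesis by simp
qed

end

theorem lemma3p3:
  fixes V :: "'a set" and E :: "'a \<Rightarrow> 'a \<Rightarrow> bool" and n :: nat
    and \<epsilon> \<alpha> :: real and M :: "('a \<times> 'a) set" and UL UR :: "'a set"
  assumes G: "graph V E" and cardV: "card V = 2 * n"
    and eps: "0 < \<epsilon>" "\<epsilon> < 1" and alpha: "\<alpha> \<ge> 10"
    and expand: "\<forall>S. S \<subseteq> V \<and> real (card S) \<le> 2 * \<epsilon> * n
                   \<longrightarrow> real (card (nbhd E S)) \<ge> \<alpha> * real (card S)"
    and M: "matching E M" and notperfect: "V - covered M \<noteq> {}"
    and part: "UL \<union> UR = V - covered M" "UL \<inter> UR = {}" "card UL = card UR"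
    and noaug: "\<not> (\<exists>xs. augmenting_path E M xs \<and> hd xs \<in> UL \<and> last xs \<in> UR
          \<and> walk_length xs \<le> 4 * nat (ceiling (log (\<alpha> / 4) ((2 * \<epsilon> * n + 1) / real (card UL)))) + 1)"
  shows "measure_pmf.prob (mu_M M)
           {\<omega>. \<exists>S \<subseteq> L_M UL M \<omega>. real (card S) > 2 * \<epsilon> * n \<and>
              (\<forall>v\<in>S. \<exists>xs. path_in (E_M E UL UR M \<omega>) xs \<and> alternating M xs \<and>
                  hd xs \<in> UL \<and> last xs = v \<and>
                  walk_length xs \<le> 2 * nat (ceiling (log (\<alpha> / 4) ((2 * \<epsilon> * n + 1) / real (card UL)))))}
         > 1 / 2"
proof -
  define t where "t = nat \<lceil>log (\<alpha> / 4) ((2 * \<epsilon> * n + 1) / real (card UL))\<rceil>"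
  interpret matching_split V E M UL UR
    using G M part(1,2) by unfold_locales
  have "0 < card UL" using card_UL_pos notperfect part(3) by blast
  then have "(2 * \<epsilon> * n + 1) / card UL \<le> (\<alpha> / 4) ^ t"
    unfolding t_def using alpha eps by (intro le_power_nat_ceiling_log divide_pos_pos add_nonneg_pos) auto
  then have "2 * \<epsilon> * n + 1 \<le> (\<alpha> / 4) ^ t * card UL"
    using \<open>0 < card UL\<close> by (simp add: divide_le_eq)
  moreover have "\<not> (\<exists>xs. augmenting_path E M xs \<and> hd xs \<in> UL \<and> last xs \<in> UR
                      \<and> walk_length xs \<le> 2 * t + 1)"
    using noaug unfolding t_def by auto
  ultimately interpret expanding_split V E M UL UR "2 * \<epsilon> * n" \<alpha> t
    using expand alpha \<open>0 < card UL\<close> by unfold_locales auto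
  have "measure_pmf.prob (mu_M M) success > 1/2"
    by (rule measure_mu_M_gt_half[OF finite_M card_failure_less_half])
  then show ?thesis unfolding success_def unfolding t_def .
qed

end
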